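(* Let $J_{ab}$ be a non-degenerate skew form on a real vector space of dimension $2n$ with $n\geq 2$, with inverse $J^{ab}$. Suppose $T_{abcd}$ is a tensor with $T_{abcd}=T_{[ab][cd]}$ and $T_{[abc]d}=J_{[ab}\psi_{c]d}$ for some tensor $\psi_{cd}$. Then there are unique tensors $\rho_{ab}$ (no symmetry assumed), $\tau_{ab}=\tau_{[ab]}$, and $X_{abcd}$ with $X_{abcd}=X_{[ab][cd]}$, $X_{[abc]d}=0$ and $J^{ab}X_{abcd}=0$, such that $$T_{abcd}=X_{abcd}+J_{c[a}\rho_{b]d}-J_{d[a}\rho_{b]c}-J_{cd}\rho_{[ab]}+J_{ab}\tau_{cd}.$$
   Context: Abstract index notation; square brackets denote skew-symmetrisation over the enclosed indices. *)

theory Defs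
  imports Complex_Main "HOL-Library.Cardinality"
begin

text \<open>Tensors on a real vector space V are represented by their components with
respect to a fixed basis of V, indexed by a finite type 'i (so dim V = CARD('i)).\<close>

type_synonym 'i tensor2 = "'i \<Rightarrow> 'i \<Rightarrow> real"
type_synonym 'i tensor4 = "'i \<Rightarrow> 'i \<Rightarrow> 'i \<Rightarrow> 'i \<Rightarrow> real"

definition skew2 :: "'i tensor2 \<Rightarrow> bool" where
  "skew2 F \<longleftrightarrow> (\<forall>a b. F a b = - F b a)"

definition alt2 :: "'i tensor2 \<Rightarrow> 'i tensor2" where
  "alt2 F a b = (F a b - F b a) / 2"

definition skew_pairs :: "'i tensor4 \<Rightarrow> bool" where
  "skew_pairs F \<longleftrightarrow> (\<forall>a b c d. F a b c d = - F b a c d \<and> F a b c d = - F a b d c)"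

definition alt3 :: "'i tensor4 \<Rightarrow> 'i tensor4" where
  "alt3 F a b c d =
     (F a b c d - F b a c d + F b c a d - F c b a d + F c a b d - F a c b d) / 6"

definition nondegenerate :: "('i::finite) tensor2 \<Rightarrow> bool" where
  "nondegenerate J \<longleftrightarrow> (\<forall>v. (\<forall>b. (\<Sum>a\<in>UNIV. v a * J a b) = 0) \<longrightarrow> v = (\<lambda>_. 0))"

definition is_inverse :: "('i::finite) tensor2 \<Rightarrow> 'i tensor2 \<Rightarrow> bool" where
  "is_inverse J K \<longleftrightarrow>
     (\<forall>a c. (\<Sum>b\<in>UNIV. K a b * J b c) = (if a = c then 1 else 0)) \<and>
     (\<forall>a c. (\<Sum>b\<in>UNIV. J a b * K b c) = (if a = c then 1 else 0))"

end

theory Submission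
  imports Defs
begin

text \<open>Skew-symmetrising the decomposition over \<open>abc\<close> kills \<open>X\<close> and leaves
  \<open>J_[ab (\<rho> + \<tau>)_c]d\<close>; since \<open>\<mu> \<mapsto> J_[ab \<mu>_c]d\<close> is injective when \<open>dim V \<noteq> 2\<close>,
  this forces \<open>\<rho> + \<tau> = \<psi>\<close>, so the symmetric part of \<open>\<rho>\<close> is that of \<open>\<psi>\<close>.
  Contracting with \<open>J^ab\<close> kills \<open>X\<close> and leaves the linear equation
  \<open>(dim V + 2) \<rho>_[cd] - (J^ab \<rho>_ab) J_cd = J^ab T_abcd + dim V \<psi>_[cd]\<close> for the skew part
  of \<open>\<rho>\<close>, which has a unique solution. Conversely, for \<open>\<rho>\<close> and \<open>\<tau> = \<psi> - \<rho>\<close> so determined,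
  \<open>X\<close> defined by the decomposition has both properties.\<close>

definition contract :: "('i::finite) tensor2 \<Rightarrow> 'i tensor2 \<Rightarrow> real" where
  "contract K F = (\<Sum>a\<in>UNIV. \<Sum>b\<in>UNIV. K a b * F a b)"

lemma contract_add [simp]: "contract K (\<lambda>a b. F a b + G a b) = contract K F + contract K G"
  by (simp add: contract_def ring_distribs sum.distrib)

lemma contract_diff [simp]: "contract K (\<lambda>a b. F a b - G a b) = contract K F - contract K G"
  by (simp add: contract_def ring_distribs sum_subtractf)

lemma contract_uminus [simp]: "contract K (\<lambda>a b. - F a b) = - contract K F"
  by (simp add: contract_def sum_negf)

lemma contract_mult_left [simp]: "contract K (\<lambda>a b. x * F a b) = x * contract K F"
  by (simp add: contract_def sum_distrib_left mult_ac)

lemma contract_mult_right [simp]: "contract K (\<lambda>a b. F a b * x) = contract K F * x"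
  by (simp add: contract_def sum_distrib_right mult_ac)

lemma contract_divide [simp]: "contract K (\<lambda>a b. F a b / x) = contract K F / x"
  by (simp add: contract_def sum_divide_distrib)

lemma alt3_diff: "alt3 (\<lambda>a b c d. F a b c d - G a b c d) = (\<lambda>a b c d. alt3 F a b c d - alt3 G a b c d)"
  unfolding alt3_def fun_eq_iff by (simp add: diff_divide_distrib[symmetric] algebra_simps)

definition symplectic_part :: "'i tensor2 \<Rightarrow> 'i tensor2 \<Rightarrow> 'i tensor2 \<Rightarrow> 'i tensor4" where
  "symplectic_part J \<rho> \<tau> a b c d =
     (J c a * \<rho> b d - J c b * \<rho> a d) / 2 - (J d a * \<rho> b c - J d b * \<rho> a c) / 2
     - J c d * alt2 \<rho> a b + J a b * \<tau> c d"

definition is_decomposition ::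
    "('i::finite) tensor2 \<Rightarrow> 'i tensor2 \<Rightarrow> 'i tensor4 \<Rightarrow> 'i tensor2 \<Rightarrow> 'i tensor2 \<Rightarrow> 'i tensor4 \<Rightarrow> bool"
  where
  "is_decomposition J K T \<rho> \<tau> X \<longleftrightarrow>
     skew2 \<tau> \<and> skew_pairs X \<and> alt3 X = (\<lambda>a b c d. 0) \<and>
     (\<forall>c d. contract K (\<lambda>a b. X a b c d) = 0) \<and>
     (\<forall>a b c d. T a b c d = X a b c d + symplectic_part J \<rho> \<tau> a b c d)"

lemma skew_pairs_diff:
  assumes "skew_pairs F" "skew_pairs G"
  shows "skew_pairs (\<lambda>a b c d. F a b c d - G a b c d)"
  using assms unfolding skew_pairs_def by (metis minus_diff_eq minus_diff_minus)

lemma skew2_contract_last_pair: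
  assumes "skew_pairs T" shows "skew2 (\<lambda>c d. contract K (\<lambda>a b. T a b c d))"
proof -
  have "(\<lambda>a b. T a b c d) = (\<lambda>a b. - T a b d c)" for c d
    using assms unfolding skew_pairs_def by metis
  then show ?thesis
    unfolding skew2_def by (metis contract_uminus)
qed

lemma skew2_alt2: "skew2 (alt2 F)"
  by (simp add: skew2_def alt2_def field_simps)

lemma skew2_add:
  assumes "skew2 F" "skew2 G" shows "skew2 (\<lambda>a b. F a b + G a b)"
  using assms unfolding skew2_def by (metis minus_add_distrib)

lemma skew2_mult:
  assumes "skew2 F" shows "skew2 (\<lambda>a b. x * F a b)"
  using assms unfolding skew2_def by (metis mult_minus_right)

lemma skew_diff_alt2_iff:
  assumes "skew2 A"
  shows "skew2 (\<lambda>c d. \<psi> c d - \<rho> c d) \<and> alt2 \<rho> = A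
           \<longleftrightarrow> \<rho> = (\<lambda>c d. (\<psi> c d + \<psi> d c) / 2 + A c d)"
proof
  assume "skew2 (\<lambda>c d. \<psi> c d - \<rho> c d) \<and> alt2 \<rho> = A"
  then have sym_part: "\<psi> d c - \<rho> d c = - (\<psi> c d - \<rho> c d)" and alt: "(\<rho> c d - \<rho> d c) / 2 = A c d"
    for c d unfolding skew2_def alt2_def fun_eq_iff by blast+
  show "\<rho> = (\<lambda>c d. (\<psi> c d + \<psi> d c) / 2 + A c d)"
  proof (intro ext)
    fix c d
    show "\<rho> c d = (\<psi> c d + \<psi> d c) / 2 + A c d"
      using sym_part[of c d] alt[of c d] by (simp add: field_simps)
  qed
next
  assume \<rho>: "\<rho> = (\<lambda>c d. (\<psi> c d + \<psi> d c) / 2 + A c d)"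
  have A: "A d c = - A c d" for c d
    using assms unfolding skew2_def by blast
  show "skew2 (\<lambda>c d. \<psi> c d - \<rho> c d) \<and> alt2 \<rho> = A"
  proof
    show "skew2 (\<lambda>c d. \<psi> c d - \<rho> c d)"
      unfolding skew2_def
    proof (intro allI)
      fix c d
      show "\<psi> c d - \<rho> c d = - (\<psi> d c - \<rho> d c)"
        using A[of c d] by (simp add: \<rho> field_simps)
    qed
    show "alt2 \<rho> = A"
    proof (intro ext)
      fix c d
      show "alt2 \<rho> c d = A c d"
        using A[of c d] by (simp add: \<rho> alt2_def field_simps)
    qed
  qed
qed

locale symplectic_form =
  fixes J K :: "('i::finite) tensor2"
  assumes J_skew: "J a b = - J b a"
    and K_J: "(\<Sum>b\<in>UNIV. K a b * J b c) = (if a = c then 1 else 0)"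
    and J_K: "(\<Sum>b\<in>UNIV. J a b * K b c) = (if a = c then 1 else 0)"
begin

lemma K_skew: "K a b = - K b a"
proof -
  have "K a b = (\<Sum>c\<in>UNIV. (\<Sum>e\<in>UNIV. K b e * J e c) * K a c)"
    by (simp add: K_J of_bool_def[symmetric])
  also have "\<dots> = (\<Sum>e\<in>UNIV. K b e * (\<Sum>c\<in>UNIV. J e c * K a c))"
    unfolding sum_distrib_left sum_distrib_right by (subst sum.swap) (simp add: mult_ac)
  also have "\<dots> = (\<Sum>e\<in>UNIV. K b e * - (\<Sum>c\<in>UNIV. K a c * J c e))"
  proof -
    have "(\<Sum>c\<in>UNIV. J e c * K a c) = - (\<Sum>c\<in>UNIV. K a c * J c e)" for e
      by (simp add: J_skew[of e] sum_negf mult.commute)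
    then show ?thesis by simp
  qed
  also have "\<dots> = - K b a"
    by (simp add: K_J sum_negf of_bool_def[symmetric])
  finally show ?thesis .
qed

lemma contract_J [simp]: "contract K J = - real CARD('i)"
proof -
  have "(\<Sum>b\<in>UNIV. K a b * J a b) = - (\<Sum>b\<in>UNIV. K a b * J b a)" for a
    by (simp add: J_skew[of a] sum_negf)
  then show ?thesis by (simp add: contract_def K_J)
qed

lemma contract_J_left [simp]: "contract K (\<lambda>a b. J b c * f a) = f c"
proof -
  have "contract K (\<lambda>a b. J b c * f a) = (\<Sum>a\<in>UNIV. (\<Sum>b\<in>UNIV. K a b * J b c) * f a)"
    unfolding contract_def by (simp add: sum_distrib_left sum_distrib_right mult_ac)
  then show ?thesis by (simp add: K_J of_bool_def[symmetric])
qed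

lemma contract_J_right [simp]: "contract K (\<lambda>a b. J c a * f b) = f c"
proof -
  have "contract K (\<lambda>a b. J c a * f b) = (\<Sum>b\<in>UNIV. (\<Sum>a\<in>UNIV. J c a * K a b) * f b)"
    unfolding contract_def by (subst sum.swap) (simp add: sum_distrib_left sum_distrib_right mult_ac)
  then show ?thesis by (simp add: J_K of_bool_def[symmetric])
qed

lemma contract_J_left' [simp]: "contract K (\<lambda>a b. J c b * f a) = - f c"
  using contract_J_left[of c "\<lambda>a. - f a"] by (simp add: J_skew[of c])

lemma contract_J_right' [simp]: "contract K (\<lambda>a b. J a c * f b) = - f c"
  using contract_J_right[of c "\<lambda>a. - f a"] by (simp add: J_skew[of _ c])

lemma contract_transpose: "contract K (\<lambda>a b. F b a) = - contract K F"
proof -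
  have "contract K (\<lambda>a b. F b a) = (\<Sum>b\<in>UNIV. \<Sum>a\<in>UNIV. K a b * F b a)"
    unfolding contract_def by (rule sum.swap)
  also have "\<dots> = - contract K F"
  proof -
    have "(\<Sum>a\<in>UNIV. K a b * F b a) = - (\<Sum>a\<in>UNIV. K b a * F b a)" for b
      by (simp add: K_skew[of _ b] sum_negf)
    then show ?thesis by (simp add: contract_def sum_negf)
  qed
  finally show ?thesis .
qed

lemma contract_alt2 [simp]: "contract K (alt2 F) = contract K F"
  by (simp add: alt2_def[abs_def] contract_transpose[of F])

lemma contract_symplectic_part:
  "contract K (\<lambda>a b. symplectic_part J \<rho> \<tau> a b c d)
     = \<rho> c d - \<rho> d c - J c d * contract K \<rho> - real CARD('i) * \<tau> c d"
  by (simp add: symplectic_part_def algebra_simps)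

lemma alt3_symplectic_part:
  "alt3 (symplectic_part J \<rho> \<tau>) = alt3 (\<lambda>a b c d. J a b * (\<rho> c d + \<tau> c d))"
proof (intro ext)
  fix a b c d
  have J: "J b a = - J a b" "J c a = - J a c" "J c b = - J b c"
          "J d a = - J a d" "J d b = - J b d" "J d c = - J c d"
    by (rule J_skew)+
  show "alt3 (symplectic_part J \<rho> \<tau>) a b c d = alt3 (\<lambda>a b c d. J a b * (\<rho> c d + \<tau> c d)) a b c d"
    unfolding alt3_def symplectic_part_def alt2_def J by (simp add: field_simps)
qed

lemma skew_pairs_symplectic_part:
  assumes "skew2 \<tau>" shows "skew_pairs (symplectic_part J \<rho> \<tau>)"
  unfolding skew_pairs_def
proof (intro allI conjI)
  fix a b c d
  have J: "J b a = - J a b" "J d c = - J c d" by (rule J_skew)+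
  have \<tau>: "\<tau> d c = - \<tau> c d" using assms unfolding skew2_def by blast
  show "symplectic_part J \<rho> \<tau> a b c d = - symplectic_part J \<rho> \<tau> b a c d"
    unfolding symplectic_part_def alt2_def J by (simp add: field_simps)
  show "symplectic_part J \<rho> \<tau> a b c d = - symplectic_part J \<rho> \<tau> a b d c"
    unfolding symplectic_part_def alt2_def J \<tau> by (simp add: field_simps)
qed

text \<open>Contracting \<open>J_[ab \<mu>_c]d\<close> with \<open>J^ab\<close> gives \<open>(2 - dim V) / 3 \<mu>_cd\<close>.\<close>
lemma alt3_J_tensor_eq_0_iff:
  assumes "CARD('i) \<noteq> 2"
  shows "alt3 (\<lambda>a b c d. J a b * \<mu> c d) = (\<lambda>a b c d. 0) \<longleftrightarrow> \<mu> = (\<lambda>c d. 0)"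
proof
  assume zero: "alt3 (\<lambda>a b c d. J a b * \<mu> c d) = (\<lambda>a b c d. 0)"
  show "\<mu> = (\<lambda>c d. 0)"
  proof (intro ext)
    fix c d
    have "contract K (\<lambda>a b. alt3 (\<lambda>a b c d. J a b * \<mu> c d) a b c d) = (4 - 2 * real CARD('i)) / 6 * \<mu> c d"
      by (simp add: alt3_def algebra_simps contract_transpose[of J])
    then have "(4 - 2 * real CARD('i)) * \<mu> c d = 0"
      by (simp add: zero contract_def)
    then show "\<mu> c d = 0" using assms by simp
  qed
qed (simp add: alt3_def[abs_def])

definition J_shift :: "'i tensor2 \<Rightarrow> 'i tensor2" where
  "J_shift A c d = (real CARD('i) + 2) * A c d - J c d * contract K A"

text \<open>Since \<open>J^ab J_ab = - dim V\<close>, the trace of \<open>J_shift A\<close> is \<open>2 dim V + 2\<close> times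
  that of \<open>A\<close>; this determines the trace of \<open>A\<close> and hence \<open>A\<close> itself.\<close>
definition J_shift_inv :: "'i tensor2 \<Rightarrow> 'i tensor2" where
  "J_shift_inv u c d = (u c d + J c d * contract K u / (2 * real CARD('i) + 2)) / (real CARD('i) + 2)"

lemma contract_J_shift: "contract K (J_shift A) = (2 * real CARD('i) + 2) * contract K A"
  by (simp add: J_shift_def[abs_def] algebra_simps)

lemma J_shift_eq_iff: "J_shift A = u \<longleftrightarrow> A = J_shift_inv u"
proof -
  define N where "N = real CARD('i)"
  define q where "q = contract K u / (2 * N + 2)"
  have N: "N + 2 \<noteq> 0" "2 * N + 2 \<noteq> 0" by (simp_all add: N_def add_pos_nonneg)
  have inv: "J_shift_inv u c d = (u c d + J c d * q) / (N + 2)" for c d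
    by (simp add: J_shift_inv_def N_def q_def)
  have J_shift: "J_shift A c d = (N + 2) * A c d - J c d * contract K A" for c d
    by (simp add: J_shift_def N_def)
  show ?thesis
  proof
    assume u: "J_shift A = u"
    have tr: "contract K A = q"
      using contract_J_shift[of A] N(2) unfolding u q_def N_def by (simp add: field_simps)
    show "A = J_shift_inv u"
    proof (intro ext)
      fix c d
      have "(N + 2) * A c d = u c d + J c d * q"
        using J_shift[of c d] tr unfolding u by simp
      then show "A c d = J_shift_inv u c d"
        using N(1) by (simp add: inv eq_divide_eq mult.commute)
    qed
  next
    assume A: "A = J_shift_inv u"
    have "contract K A = ((2 * N + 2) * q - N * q) / (N + 2)"
      using N(2) unfolding A inv[abs_def] by (simp add: q_def N_def)
    also have "\<dots> = q"
      using N(1) by (simp add: field_simps)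
    finally have tr: "contract K A = q" .
    show "J_shift A = u"
    proof (intro ext)
      fix c d
      show "J_shift A c d = u c d"
        unfolding J_shift tr using N(1) by (simp add: A inv)
    qed
  qed
qed

lemma skew2_J_shift_inv:
  assumes "skew2 u" shows "skew2 (J_shift_inv u)"
  unfolding skew2_def
proof (intro allI)
  fix a b
  have "u b a = - u a b" using assms unfolding skew2_def by blast
  moreover have "J b a = - J a b" by (rule J_skew)
  ultimately show "J_shift_inv u a b = - J_shift_inv u b a"
    by (simp add: J_shift_inv_def diff_divide_distrib add_divide_distrib)
qed

lemma alt3_remainder_eq_0_iff:
  assumes "CARD('i) \<noteq> 2" and "alt3 T = alt3 (\<lambda>a b c d. J a b * \<psi> c d)"
  shows "alt3 (\<lambda>a b c d. T a b c d - symplectic_part J \<rho> \<tau> a b c d) = (\<lambda>a b c d. 0)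
           \<longleftrightarrow> \<tau> = (\<lambda>c d. \<psi> c d - \<rho> c d)"
proof -
  have distrib: "(\<lambda>a b c d. J a b * (\<psi> c d - (\<rho> c d + \<tau> c d)))
                   = (\<lambda>a b c d. J a b * \<psi> c d - J a b * (\<rho> c d + \<tau> c d))"
    by (simp add: right_diff_distrib)
  have remainder: "alt3 (\<lambda>a b c d. T a b c d - symplectic_part J \<rho> \<tau> a b c d)
          = alt3 (\<lambda>a b c d. J a b * (\<psi> c d - (\<rho> c d + \<tau> c d)))"
    unfolding distrib alt3_diff assms(2) alt3_symplectic_part ..
  show ?thesis
    unfolding remainder alt3_J_tensor_eq_0_iff[OF assms(1)] by (auto simp: fun_eq_iff algebra_simps)
qed

lemma contract_remainder_eq_0_iff:
  assumes "skew2 (\<lambda>c d. \<psi> c d - \<rho> c d)"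
  shows "(\<forall>c d. contract K (\<lambda>a b. T a b c d - symplectic_part J \<rho> (\<lambda>c d. \<psi> c d - \<rho> c d) a b c d) = 0)
           \<longleftrightarrow> J_shift (alt2 \<rho>) = (\<lambda>c d. contract K (\<lambda>a b. T a b c d) + real CARD('i) * alt2 \<psi> c d)"
    (is "(\<forall>c d. ?C c d = 0) \<longleftrightarrow> J_shift (alt2 \<rho>) = ?u")
proof -
  have difference: "J_shift (alt2 \<rho>) c d - ?u c d = - ?C c d" for c d
  proof -
    have "\<psi> d c - \<rho> d c = - (\<psi> c d - \<rho> c d)"
      using assms unfolding skew2_def by blast
    then have \<psi>: "\<psi> d c = \<rho> d c - \<psi> c d + \<rho> c d"
      by linarith
    show ?thesis
      unfolding J_shift_def contract_diff contract_symplectic_part contract_alt2 alt2_def \<psi>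
      by (simp add: field_simps)
  qed
  have "J_shift (alt2 \<rho>) = ?u \<longleftrightarrow> (\<forall>c d. J_shift (alt2 \<rho>) c d - ?u c d = 0)"
    by (simp add: fun_eq_iff)
  also have "\<dots> \<longleftrightarrow> (\<forall>c d. ?C c d = 0)"
    by (simp only: difference neg_equal_0_iff_equal)
  finally show ?thesis ..
qed

lemma is_decomposition_iff:
  assumes "CARD('i) \<noteq> 2" and "skew_pairs T" and "alt3 T = alt3 (\<lambda>a b c d. J a b * \<psi> c d)"
  shows "is_decomposition J K T \<rho> \<tau> X \<longleftrightarrow>
           \<tau> = (\<lambda>c d. \<psi> c d - \<rho> c d) \<and> skew2 \<tau> \<and>
           X = (\<lambda>a b c d. T a b c d - symplectic_part J \<rho> \<tau> a b c d) \<and>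
           J_shift (alt2 \<rho>) = (\<lambda>c d. contract K (\<lambda>a b. T a b c d) + real CARD('i) * alt2 \<psi> c d)"
proof -
  have X_eq: "(\<forall>a b c d. T a b c d = X a b c d + symplectic_part J \<rho> \<tau> a b c d)
                \<longleftrightarrow> X = (\<lambda>a b c d. T a b c d - symplectic_part J \<rho> \<tau> a b c d)"
    by (auto simp: fun_eq_iff)
  show ?thesis
  proof (cases "skew2 \<tau> \<and> X = (\<lambda>a b c d. T a b c d - symplectic_part J \<rho> \<tau> a b c d)")
    case True
    then have \<tau>: "skew2 \<tau>" and X: "X = (\<lambda>a b c d. T a b c d - symplectic_part J \<rho> \<tau> a b c d)"
      by blast+
    have "skew_pairs X"
      unfolding X by (rule skew_pairs_diff[OF assms(2) skew_pairs_symplectic_part[OF \<tau>]])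
    then have "is_decomposition J K T \<rho> \<tau> X \<longleftrightarrow> \<tau> = (\<lambda>c d. \<psi> c d - \<rho> c d) \<and>
        (\<forall>c d. contract K (\<lambda>a b. T a b c d - symplectic_part J \<rho> \<tau> a b c d) = 0)"
      unfolding is_decomposition_def X_eq using True
      by (simp add: X alt3_remainder_eq_0_iff[OF assms(1,3)])
    also have "\<dots> \<longleftrightarrow> \<tau> = (\<lambda>c d. \<psi> c d - \<rho> c d) \<and>
        J_shift (alt2 \<rho>) = (\<lambda>c d. contract K (\<lambda>a b. T a b c d) + real CARD('i) * alt2 \<psi> c d)"
      using \<tau> contract_remainder_eq_0_iff[of \<psi> \<rho> T] by blast
    finally show ?thesis
      using True by blast
  next
    case False
    then show ?thesis
      unfolding is_decomposition_def X_eq by blast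
  qed
qed

end

theorem lemma14:
  fixes n :: nat
    and J Jinv :: "('i::finite) tensor2"
    and T :: "'i tensor4"
  assumes dim: "CARD('i) = 2 * n" and n2: "n \<ge> 2"
    and Jskew: "skew2 J" and Jnd: "nondegenerate J"
    and Jinv: "is_inverse J Jinv"
    and Tsym: "skew_pairs T"
    and Tbianchi: "\<exists>\<psi> :: 'i tensor2.
                     alt3 T = alt3 (\<lambda>a b c d. J a b * \<psi> c d)"
  shows "\<exists>!(\<rho>, \<tau>, X). \<comment> \<open>types: 'i tensor2, 'i tensor2, 'i tensor4\<close>
           skew2 (\<tau> :: 'i tensor2) \<and>
           skew_pairs (X :: 'i tensor4) \<and>
           alt3 X = (\<lambda>a b c d. 0) \<and>
           (\<forall>c d. (\<Sum>a\<in>UNIV. \<Sum>b\<in>UNIV. Jinv a b * X a b c d) = 0) \<and>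
           (\<forall>a b c d. T a b c d =
               X a b c d
               + (J c a * \<rho> b d - J c b * \<rho> a d) / 2
               - (J d a * \<rho> b c - J d b * \<rho> a c) / 2
               - J c d * alt2 (\<rho> :: 'i tensor2) a b
               + J a b * \<tau> c d)"
proof -
  interpret symplectic_form J Jinv
    using Jskew Jinv unfolding skew2_def is_inverse_def by unfold_locales blast+
  obtain \<psi> where \<psi>: "alt3 T = alt3 (\<lambda>a b c d. J a b * \<psi> c d)"
    using Tbianchi by blast
  have N: "CARD('i) \<noteq> 2" using dim n2 by simp
  define u where "u = (\<lambda>c d. contract Jinv (\<lambda>a b. T a b c d) + real CARD('i) * alt2 \<psi> c d)"
  define \<rho>\<^sub>0 where "\<rho>\<^sub>0 = (\<lambda>c d. (\<psi> c d + \<psi> d c) / 2 + J_shift_inv u c d)"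
  have "skew2 u"
    unfolding u_def by (intro skew2_add skew2_mult skew2_alt2 skew2_contract_last_pair Tsym)
  then have unique: "is_decomposition J Jinv T \<rho> \<tau> X \<longleftrightarrow>
      (\<rho>, \<tau>, X) = (\<rho>\<^sub>0, \<lambda>c d. \<psi> c d - \<rho>\<^sub>0 c d,
                   \<lambda>a b c d. T a b c d - symplectic_part J \<rho>\<^sub>0 (\<lambda>c d. \<psi> c d - \<rho>\<^sub>0 c d) a b c d)"
    for \<rho> \<tau> X
    using skew_diff_alt2_iff[OF skew2_J_shift_inv, of u \<psi> \<rho>]
    unfolding is_decomposition_iff[OF N Tsym \<psi>] J_shift_eq_iff u_def[symmetric] \<rho>\<^sub>0_def
    by auto
  have "\<exists>!(\<rho>, \<tau>, X). is_decomposition J Jinv T \<rho> \<tau> X"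
    using unique by (intro ex1I[where a = "(\<rho>\<^sub>0, _, _)"]) auto
  then show ?thesis
    unfolding is_decomposition_def symplectic_part_def contract_def
    by (simp only: add.assoc[symmetric] add_diff_eq)
qed

end
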